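(* Let $d\ge1$, $n\ge3$, $u\in\mathbb{C}\setminus\{0\}$. The defining two-sided ideal of $\mathrm{CTL}_{d,n}(u)$ in $\mathrm{Y}_{d,n}(u)$ is generated by any single element $c_{i,i+1}$, $1\le i\le n-2$. Hence $\mathrm{CTL}_{d,n}(u)$ is presented by generators $t_1,\ldots,t_n,g_1,\ldots,g_{n-1}$, the defining relations of $\mathrm{Y}_{d,n}(u)$, and the relation $c_{1,2}=0$.
   Context: The Yokonuma–Hecke algebra $\mathrm{Y}_{d,n}(u)$ is the unital associative $\mathbb{C}$-algebra with generators $g_1,\ldots,g_{n-1},t_1,\ldots,t_n$ and relations: $g_ig_j=g_jg_i$ for $|i-j|>1$; $g_{i+1}g_ig_{i+1}=g_ig_{i+1}g_i$; $t_it_j=t_jt_i$; $t_i^d=1$; $g_it_i=t_{i+1}g_i$; $g_it_{i+1}=t_ig_i$; $g_it_j=t_jg_i$ for $j\ne i,i+1$; $g_i^2=1+(u-1)e_i+(u-1)e_ig_i$, where $e_i=\frac1d\sum_{s=0}^{d-1}t_i^st_{i+1}^{d-s}$. For $w\in S_n$ with reduced expression $s_{i_1}\cdots s_{i_k}$ put $g_w=g_{i_1}\cdots g_{i_k}$; $g_{i,i+1}=\sum_{w\in\langle s_i,s_{i+1}\rangle}g_w$ and $c_{i,i+1}=\sum_{a,b,c=0}^{d-1}t_i^at_{i+1}^bt_{i+2}^c\,g_{i,i+1}$ (the sum of $t_1^{a_1}\cdots t_n^{a_n}g_w$ over the subgroup $\langle t_i,t_{i+1},t_{i+2}\rangle\rtimes\langle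 s_i,s_{i+1}\rangle$ of $(\mathbb{Z}/d\mathbb{Z})^n\rtimes S_n$). $\mathrm{CTL}_{d,n}(u)$ is the quotient of $\mathrm{Y}_{d,n}(u)$ by the two-sided ideal generated by all $c_{i,i+1}$. *)

theory Defs
  imports Complex_Main "HOL-Library.Poly_Mapping"
begin

datatype gen = G nat | T nat

datatype word = Word "gen list"

fun word_list :: "word \<Rightarrow> gen list" where "word_list (Word xs) = xs"

instantiation word :: monoid_add
begin
definition zero_word :: word where "zero_word = Word []"
definition plus_word :: "word \<Rightarrow> word \<Rightarrow> word" where
  "plus_word v w = Word (word_list v @ word_list w)"
instance
proof
  fix a b c :: word
  show "a + b + c = a + (b + c)"
    by (cases a; cases b; cases c) (simp add: plus_word_def)
  show "0 + a = a" by (cases a) (simp add: plus_word_def zero_word_def)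
  show "a + 0 = a" by (cases a) (simp add: plus_word_def zero_word_def)
qed
end

text \<open>The free associative unital C-algebra on the symbols: finitely supported
  C-valued functions on words, with convolution product (= concatenation).\<close>
type_synonym fa = "word \<Rightarrow>\<^sub>0 complex"

definition sc :: "complex \<Rightarrow> fa" where "sc c = Poly_Mapping.single (Word []) c"
definition gg :: "nat \<Rightarrow> fa" where "gg i = Poly_Mapping.single (Word [G i]) 1"
definition tt :: "nat \<Rightarrow> fa" where "tt i = Poly_Mapping.single (Word [T i]) 1"

definition valid_gen :: "nat \<Rightarrow> gen \<Rightarrow> bool" where
  "valid_gen n x = (case x of G i \<Rightarrow> 1 \<le> i \<and> i \<le> n - 1 | T i \<Rightarrow> 1 \<le> i \<and> i \<le> n)"

definition FA :: "nat \<Rightarrow> fa set" where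
  "FA n = {p. \<forall>w \<in> Poly_Mapping.keys p. \<forall>x \<in> set (word_list w). valid_gen n x}"

inductive_set ideal_gen :: "nat \<Rightarrow> fa set \<Rightarrow> fa set" for n S where
  zero: "0 \<in> ideal_gen n S"
| gen: "a \<in> FA n \<Longrightarrow> s \<in> S \<Longrightarrow> b \<in> FA n \<Longrightarrow> a * s * b \<in> ideal_gen n S"
| add: "x \<in> ideal_gen n S \<Longrightarrow> y \<in> ideal_gen n S \<Longrightarrow> x + y \<in> ideal_gen n S"

definition ee :: "nat \<Rightarrow> nat \<Rightarrow> fa" where
  "ee d i = sc (1 / of_nat d) * (\<Sum>s<d. tt i ^ s * tt (Suc i) ^ (d - s))"

definition YH_rels :: "nat \<Rightarrow> nat \<Rightarrow> complex \<Rightarrow> fa set" where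
  "YH_rels d n u =
     {gg i * gg j - gg j * gg i | i j. 1 \<le> i \<and> i \<le> n - 1 \<and> 1 \<le> j \<and> j \<le> n - 1
                                      \<and> (i > j + 1 \<or> j > i + 1)}
   \<union> {gg (i+1) * gg i * gg (i+1) - gg i * gg (i+1) * gg i | i. 1 \<le> i \<and> i \<le> n - 2}
   \<union> {tt i * tt j - tt j * tt i | i j. 1 \<le> i \<and> i \<le> n \<and> 1 \<le> j \<and> j \<le> n}
   \<union> {tt i ^ d - 1 | i. 1 \<le> i \<and> i \<le> n}
   \<union> {gg i * tt i - tt (i+1) * gg i | i. 1 \<le> i \<and> i \<le> n - 1}
   \<union> {gg i * tt (i+1) - tt i * gg i | i. 1 \<le> i \<and> i \<le> n - 1}
   \<union> {gg i * tt j - tt j * gg i | i j. 1 \<le> i \<and> i \<le> n - 1 \<and> 1 \<le> j \<and> j \<le> n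
                                      \<and> j \<noteq> i \<and> j \<noteq> i + 1}
   \<union> {gg i ^ 2 - (1 + sc (u - 1) * ee d i + sc (u - 1) * ee d i * gg i)
        | i. 1 \<le> i \<and> i \<le> n - 1}"

text \<open>g_{i,i+1}: sum of g_w over w in the subgroup generated by s_i, s_{i+1}
  (reduced words: 1, s_i, s_{i+1}, s_i s_{i+1}, s_{i+1} s_i, s_i s_{i+1} s_i).\<close>
definition gsum :: "nat \<Rightarrow> fa" where
  "gsum i = 1 + gg i + gg (i+1) + gg i * gg (i+1) + gg (i+1) * gg i
            + gg i * gg (i+1) * gg i"

definition cc :: "nat \<Rightarrow> nat \<Rightarrow> fa" where
  "cc d i = (\<Sum>a<d. \<Sum>b<d. \<Sum>c<d. tt i ^ a * tt (i+1) ^ b * tt (i+2) ^ c) * gsum i"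

end

theory Submission
  imports Defs
begin

text \<open>
  Modulo the Yokonuma-Hecke relations every \<open>g\<^sub>k\<close> is a unit, with inverse
  \<open>g\<^sub>k + (u\<^sup>-\<^sup>1 - 1) e\<^sub>k + (u\<^sup>-\<^sup>1 - 1) e\<^sub>k g\<^sub>k\<close>; this uses that \<open>e\<^sub>k\<close> is an
  idempotent commuting with \<open>g\<^sub>k\<close>. Conjugation by the unit \<open>W = g\<^sub>i g\<^sub>i\<^sub>+\<^sub>1 g\<^sub>i\<^sub>+\<^sub>2\<close>
  shifts each of \<open>g\<^sub>i, g\<^sub>i\<^sub>+\<^sub>1, t\<^sub>i, t\<^sub>i\<^sub>+\<^sub>1, t\<^sub>i\<^sub>+\<^sub>2\<close> one index up (braid and
  commutation relations), so \<open>W c\<^sub>i\<^sub>,\<^sub>i\<^sub>+\<^sub>1 \<equiv> c\<^sub>i\<^sub>+\<^sub>1\<^sub>,\<^sub>i\<^sub>+\<^sub>2 W\<close>. Hence, in any ideal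
  containing the relations, \<open>c\<^sub>i\<^sub>,\<^sub>i\<^sub>+\<^sub>1\<close> lies in the ideal iff \<open>c\<^sub>i\<^sub>+\<^sub>1\<^sub>,\<^sub>i\<^sub>+\<^sub>2\<close> does,
  and chaining these shifts gives the theorem.
\<close>

lemma word_list_plus [simp]: "word_list (a + b) = word_list a @ word_list b"
  by (simp add: plus_word_def)

lemma FA_zero [simp]: "0 \<in> FA n"
  by (simp add: FA_def)

lemma FA_one [simp]: "1 \<in> FA n"
  by (simp add: FA_def zero_word_def)

lemma FA_add [simp]: "p \<in> FA n \<Longrightarrow> q \<in> FA n \<Longrightarrow> p + q \<in> FA n"
  unfolding FA_def using keys_add[of p q] by auto

lemma FA_uminus [simp]: "p \<in> FA n \<Longrightarrow> - p \<in> FA n"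
  unfolding FA_def by simp

lemma FA_mult [simp]:
  assumes p: "p \<in> FA n" and q: "q \<in> FA n"
  shows "p * q \<in> FA n"
  unfolding FA_def
proof (intro CollectI ballI)
  fix w x assume w: "w \<in> Poly_Mapping.keys (p * q)" and x: "x \<in> set (word_list w)"
  from w keys_mult[of p q] obtain a b
    where "w = a + b" "a \<in> Poly_Mapping.keys p" "b \<in> Poly_Mapping.keys q" by blast
  with p q x show "valid_gen n x" unfolding FA_def by auto
qed

lemma FA_power [simp]: "p \<in> FA n \<Longrightarrow> p ^ m \<in> FA n"
  by (induction m) simp_all

lemma FA_sum [simp]: "(\<And>i. i \<in> A \<Longrightarrow> f i \<in> FA n) \<Longrightarrow> sum f A \<in> FA n"
  by (induction A rule: infinite_finite_induct) simp_all

lemma FA_sc [simp]: "sc c \<in> FA n"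
  by (simp add: FA_def sc_def)

lemma FA_gg [simp]: "1 \<le> i \<Longrightarrow> i \<le> n - 1 \<Longrightarrow> gg i \<in> FA n"
  by (simp add: FA_def gg_def valid_gen_def)

lemma FA_tt [simp]: "1 \<le> i \<Longrightarrow> i \<le> n \<Longrightarrow> tt i \<in> FA n"
  by (simp add: FA_def tt_def valid_gen_def)

lemma FA_ee [simp]: "1 \<le> i \<Longrightarrow> i \<le> n - 1 \<Longrightarrow> ee d i \<in> FA n"
  by (simp add: ee_def)

lemma FA_cc [simp]: "1 \<le> i \<Longrightarrow> i + 2 \<le> n \<Longrightarrow> cc d i \<in> FA n"
  by (simp add: cc_def gsum_def)

lemma sc_eq_single_zero: "sc c = Poly_Mapping.single 0 c"
  by (simp add: sc_def zero_word_def)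

lemma sc_commute: "sc c * p = p * sc c"
proof -
  have unit_sum: "(\<Sum>b. c when 0 = b when w = a + b) = (c when w = a)" for c :: complex and a w :: word
  proof -
    have "(c when 0 = b when w = a + b) = ((c when w = a) when b = 0)" for b
      by (auto simp: when_def)
    then show ?thesis by simp
  qed
  have "Poly_Mapping.single 0 c * p = Poly_Mapping.map ((*) c) p"
    by (simp add: mult_map_scale_conv_mult)
  also have "\<dots> = p * Poly_Mapping.single 0 c"
    by transfer (rule ext, simp only: prod_fun_def unit_sum mult_when Sum_any_when_equal',
        simp add: when_def)
  finally show ?thesis by (simp add: sc_eq_single_zero)
qed

lemma sc_add: "sc (a + b) = sc a + sc b"
  by (simp add: sc_eq_single_zero single_add)

lemma sc_mult: "sc (a * b) = sc a * sc b"
  by (simp add: sc_eq_single_zero mult_single)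

lemma sc_of_nat: "sc (of_nat m) = of_nat m"
  by (simp add: sc_eq_single_zero)

lemma FA_of_nat [simp]: "of_nat m \<in> FA n"
  using FA_sc[of "of_nat m" n] by (simp add: sc_of_nat)

lemma cc_expand: "cc d j =
    (\<Sum>a<d. \<Sum>b<d. \<Sum>c<d. tt j ^ a * tt (Suc j) ^ b * tt (Suc (Suc j)) ^ c)
  * (1 + gg j + gg (Suc j) + gg j * gg (Suc j) + gg (Suc j) * gg j + gg j * gg (Suc j) * gg j)"
  by (simp add: cc_def gsum_def)

lemma ideal_gen_mult_left:
  assumes "x \<in> ideal_gen n S" "a \<in> FA n"
  shows "a * x \<in> ideal_gen n S"
  using assms
proof (induction x rule: ideal_gen.induct)
  case zero
  then show ?case by (simp add: ideal_gen.zero)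
next
  case (gen a' s b)
  then show ?case using ideal_gen.gen[of "a * a'" n s S b] by (simp add: mult.assoc)
next
  case (add x y)
  then show ?case by (simp add: distrib_left ideal_gen.add)
qed

lemma ideal_gen_mult_right:
  assumes "x \<in> ideal_gen n S" "b \<in> FA n"
  shows "x * b \<in> ideal_gen n S"
  using assms
proof (induction x rule: ideal_gen.induct)
  case zero
  then show ?case by (simp add: ideal_gen.zero)
next
  case (gen a s b')
  then show ?case using ideal_gen.gen[of a n s S "b' * b"] by (simp add: mult.assoc)
next
  case (add x y)
  then show ?case by (simp add: distrib_right ideal_gen.add)
qed

lemma ideal_gen_uminus: "x \<in> ideal_gen n S \<Longrightarrow> - x \<in> ideal_gen n S"
  using ideal_gen_mult_left[of x n S "-1"] by simp

lemma ideal_gen_sum: "(\<And>i. i \<in> A \<Longrightarrow> f i \<in> ideal_gen n S) \<Longrightarrow> sum f A \<in> ideal_gen n S"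
  by (induction A rule: infinite_finite_induct) (simp_all add: ideal_gen.zero ideal_gen.add)

lemma ideal_gen_base: "s \<in> S \<Longrightarrow> s \<in> ideal_gen n S"
  using ideal_gen.gen[of 1 n s S 1] by simp

lemma ideal_gen_subset:
  assumes "S' \<subseteq> ideal_gen n S"
  shows "ideal_gen n S' \<subseteq> ideal_gen n S"
proof
  fix x assume "x \<in> ideal_gen n S'"
  then show "x \<in> ideal_gen n S"
  proof (induction x rule: ideal_gen.induct)
    case zero
    then show ?case by (rule ideal_gen.zero)
  next
    case (gen a s b)
    then show ?case using assms by (blast intro: ideal_gen_mult_left ideal_gen_mult_right)
  next
    case (add x y)
    from add.IH show ?case by (rule ideal_gen.add)
  qed
qed

lemma ideal_gen_mono: "S' \<subseteq> S \<Longrightarrow> ideal_gen n S' \<subseteq> ideal_gen n S"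
  by (intro ideal_gen_subset) (auto intro: ideal_gen_base)

locale yh_ideal =
  fixes d n :: nat and u :: complex and S :: "fa set"
  assumes YH_rels_subset: "YH_rels d n u \<subseteq> S"
    and d_pos: "1 \<le> d" and u_nonzero: "u \<noteq> 0"
begin

definition eqv :: "fa \<Rightarrow> fa \<Rightarrow> bool" (infix "\<approx>" 50)
  where "x \<approx> y \<longleftrightarrow> x - y \<in> ideal_gen n S"

lemma eqv_refl [simp]: "x \<approx> x"
  by (simp add: eqv_def ideal_gen.zero)

lemma eqv_sym: "x \<approx> y \<Longrightarrow> y \<approx> x"
  unfolding eqv_def using ideal_gen_uminus[of "x - y"] by simp

lemma eqv_trans [trans]: "x \<approx> y \<Longrightarrow> y \<approx> z \<Longrightarrow> x \<approx> z"
  unfolding eqv_def using ideal_gen.add[of "x - y" n S "y - z"] by simp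

lemma eqv_add: "x \<approx> x' \<Longrightarrow> y \<approx> y' \<Longrightarrow> x + y \<approx> x' + y'"
  unfolding eqv_def using ideal_gen.add[of "x - x'" n S "y - y'"] by (simp add: algebra_simps)

lemma eqv_mult_left: "a \<in> FA n \<Longrightarrow> x \<approx> y \<Longrightarrow> a * x \<approx> a * y"
  unfolding eqv_def using ideal_gen_mult_left[of "x - y" n S a] by (simp add: algebra_simps)

lemma eqv_mult_right: "a \<in> FA n \<Longrightarrow> x \<approx> y \<Longrightarrow> x * a \<approx> y * a"
  unfolding eqv_def using ideal_gen_mult_right[of "x - y" n S a] by (simp add: algebra_simps)

lemma eqv_mult: "x \<approx> x' \<Longrightarrow> y \<approx> y' \<Longrightarrow> x' \<in> FA n \<Longrightarrow> y \<in> FA n \<Longrightarrow> x * y \<approx> x' * y'"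
  by (meson eqv_mult_left eqv_mult_right eqv_trans)

lemma eqv_sum: "(\<And>i. i \<in> A \<Longrightarrow> f i \<approx> g i) \<Longrightarrow> sum f A \<approx> sum g A"
  unfolding eqv_def using ideal_gen_sum[of A "\<lambda>i. f i - g i" n S] by (simp add: sum_subtractf)

lemma eqv_power_one: "a \<in> FA n \<Longrightarrow> a \<approx> 1 \<Longrightarrow> a ^ m \<approx> 1"
  by (induction m) (simp_all add: eqv_mult[where x' = 1 and y' = 1, simplified])

lemma eqv_zero_iff: "x \<approx> 0 \<longleftrightarrow> x \<in> ideal_gen n S"
  by (simp add: eqv_def)

lemma eqv_of_YH_rel: "l - r \<in> YH_rels d n u \<Longrightarrow> l \<approx> r"
  unfolding eqv_def using YH_rels_subset ideal_gen_base[of "l - r" S n] by blast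

lemma g_commute_far:
  "1 \<le> i \<Longrightarrow> i \<le> n - 1 \<Longrightarrow> 1 \<le> j \<Longrightarrow> j \<le> n - 1 \<Longrightarrow> i > j + 1 \<or> j > i + 1
   \<Longrightarrow> gg i * gg j \<approx> gg j * gg i"
  by (rule eqv_of_YH_rel) (unfold YH_rels_def, blast)

lemma g_braid:
  "1 \<le> i \<Longrightarrow> i \<le> n - 2 \<Longrightarrow> gg (Suc i) * gg i * gg (Suc i) \<approx> gg i * gg (Suc i) * gg i"
  by (rule eqv_of_YH_rel) (unfold YH_rels_def Suc_eq_plus1, blast)

lemma t_commute: "1 \<le> i \<Longrightarrow> i \<le> n \<Longrightarrow> 1 \<le> j \<Longrightarrow> j \<le> n \<Longrightarrow> tt i * tt j \<approx> tt j * tt i"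
  by (rule eqv_of_YH_rel) (unfold YH_rels_def, blast)

lemma t_power_d: "1 \<le> i \<Longrightarrow> i \<le> n \<Longrightarrow> tt i ^ d \<approx> 1"
  by (rule eqv_of_YH_rel) (unfold YH_rels_def, blast)

lemma g_t: "1 \<le> i \<Longrightarrow> i \<le> n - 1 \<Longrightarrow> gg i * tt i \<approx> tt (Suc i) * gg i"
  by (rule eqv_of_YH_rel) (unfold YH_rels_def Suc_eq_plus1, blast)

lemma g_t_Suc: "1 \<le> i \<Longrightarrow> i \<le> n - 1 \<Longrightarrow> gg i * tt (Suc i) \<approx> tt i * gg i"
  by (rule eqv_of_YH_rel) (unfold YH_rels_def Suc_eq_plus1, blast)

lemma g_t_commute_far:
  "1 \<le> i \<Longrightarrow> i \<le> n - 1 \<Longrightarrow> 1 \<le> j \<Longrightarrow> j \<le> n \<Longrightarrow> j \<noteq> i \<Longrightarrow> j \<noteq> Suc i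
   \<Longrightarrow> gg i * tt j \<approx> tt j * gg i"
  by (rule eqv_of_YH_rel) (unfold YH_rels_def Suc_eq_plus1, blast)

lemma g_quadratic: "1 \<le> i \<Longrightarrow> i \<le> n - 1 \<Longrightarrow>
   gg i * gg i \<approx> 1 + sc (u - 1) * ee d i + sc (u - 1) * ee d i * gg i"
  by (rule eqv_of_YH_rel) (unfold YH_rels_def power2_eq_square[symmetric], blast)

definition intertwines :: "fa \<Rightarrow> fa \<Rightarrow> fa \<Rightarrow> bool"
  where "intertwines g x y \<longleftrightarrow> g * x \<approx> y * g"

lemma intertwines_one: "intertwines g 1 1"
  by (simp add: intertwines_def)

lemma intertwines_add:
  "intertwines g x y \<Longrightarrow> intertwines g x' y' \<Longrightarrow> intertwines g (x + x') (y + y')"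
  unfolding intertwines_def by (simp add: distrib_left distrib_right eqv_add)

lemma intertwines_mult:
  assumes "intertwines g x y" "intertwines g x' y'" "x' \<in> FA n" "y \<in> FA n"
  shows "intertwines g (x * x') (y * y')"
proof -
  have "g * (x * x') = (g * x) * x'" by (simp add: mult.assoc)
  also have "\<dots> \<approx> (y * g) * x'"
    using assms by (intro eqv_mult_right) (simp_all add: intertwines_def)
  also have "\<dots> = y * (g * x')" by (simp add: mult.assoc)
  also have "\<dots> \<approx> y * (y' * g)"
    using assms by (intro eqv_mult_left) (simp_all add: intertwines_def)
  finally show ?thesis by (simp add: intertwines_def mult.assoc)
qed

lemma intertwines_power:
  "intertwines g x y \<Longrightarrow> x \<in> FA n \<Longrightarrow> y \<in> FA n \<Longrightarrow> intertwines g (x ^ m) (y ^ m)"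
  by (induction m) (simp_all add: intertwines_one intertwines_mult)

lemma intertwines_sum:
  "(\<And>i. i \<in> A \<Longrightarrow> intertwines g (f i) (f' i)) \<Longrightarrow> intertwines g (sum f A) (sum f' A)"
  unfolding intertwines_def by (simp add: sum_distrib_left sum_distrib_right eqv_sum)

lemma intertwines_sc:
  assumes "intertwines g x y"
  shows "intertwines g (sc c * x) (sc c * y)"
proof -
  have "g * (sc c * x) = sc c * (g * x)" by (metis mult.assoc sc_commute)
  also have "\<dots> \<approx> sc c * (y * g)"
    using assms by (intro eqv_mult_left) (simp_all add: intertwines_def)
  finally show ?thesis by (simp add: intertwines_def mult.assoc)
qed

lemma intertwines_comp:
  assumes "intertwines b x y" "intertwines a y z" "a \<in> FA n" "b \<in> FA n"
  shows "intertwines (a * b) x z"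
proof -
  have "a * b * x = a * (b * x)" by (simp add: mult.assoc)
  also have "\<dots> \<approx> a * (y * b)"
    using assms by (intro eqv_mult_left) (simp_all add: intertwines_def)
  also have "\<dots> = (a * y) * b" by (simp add: mult.assoc)
  also have "\<dots> \<approx> (z * a) * b"
    using assms by (intro eqv_mult_right) (simp_all add: intertwines_def)
  finally show ?thesis by (simp add: intertwines_def mult.assoc)
qed

lemma intertwines_eqv_right:
  "intertwines g x y \<Longrightarrow> y \<approx> y' \<Longrightarrow> g \<in> FA n \<Longrightarrow> intertwines g x y'"
  unfolding intertwines_def by (meson eqv_mult_right eqv_trans)

lemma commute_sym: "intertwines a b b \<Longrightarrow> intertwines b a a"
  unfolding intertwines_def by (rule eqv_sym)

lemma commute_power:
  assumes "intertwines a b b" "a \<in> FA n" "b \<in> FA n"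
  shows "intertwines (a ^ m) (b ^ k) (b ^ k)"
proof -
  have "intertwines (b ^ k) a a"
    using assms by (simp add: commute_sym intertwines_power)
  then show ?thesis
    using assms by (simp add: commute_sym intertwines_power)
qed

lemma commute_power_mult_distrib:
  assumes ba: "intertwines b a a" and a: "a \<in> FA n" and b: "b \<in> FA n"
  shows "(a * b) ^ s \<approx> a ^ s * b ^ s"
proof (induction s)
  case 0
  then show ?case by simp
next
  case (Suc s)
  have comm: "b ^ s * a \<approx> a * b ^ s"
    using commute_power[OF ba b a, of s 1] by (simp add: intertwines_def)
  have "(a * b) ^ Suc s = (a * b) ^ s * (a * b)" by (rule power_Suc2)
  also have "\<dots> \<approx> (a ^ s * b ^ s) * (a * b)" using Suc a b by (intro eqv_mult_right) simp_all
  also have "\<dots> = a ^ s * ((b ^ s * a) * b)" by (simp add: mult.assoc)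
  also have "\<dots> \<approx> a ^ s * ((a * b ^ s) * b)"
    using comm a b by (intro eqv_mult_left eqv_mult_right) simp_all
  also have "\<dots> = a ^ Suc s * b ^ Suc s" by (simp only: mult.assoc power_Suc2)
  finally show ?case .
qed

definition geom :: "fa \<Rightarrow> fa"
  where "geom w = (\<Sum>s<d. w ^ s)"

lemma FA_geom [simp]: "w \<in> FA n \<Longrightarrow> geom w \<in> FA n"
  by (simp add: geom_def)

lemma geom_mult_power:
  assumes w: "w \<in> FA n" and wd: "w ^ d \<approx> 1"
  shows "geom w * w ^ r \<approx> geom w"
proof (induction r)
  case 0
  then show ?case by simp
next
  case (Suc r)
  have "geom w * w - geom w = (\<Sum>s<d. w ^ Suc s - w ^ s)"
    by (simp add: geom_def sum_distrib_right sum_subtractf power_commutes)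
  also have "\<dots> = w ^ d - 1"
    by (simp only: sum_lessThan_telescope[of "\<lambda>s. w ^ s" d] power_0)
  finally have absorb: "geom w * w \<approx> geom w" using wd by (simp add: eqv_def)
  have "geom w * w ^ Suc r = (geom w * w ^ r) * w" by (simp add: mult.assoc power_commutes)
  also have "\<dots> \<approx> geom w * w" using Suc w by (intro eqv_mult_right)
  also have "\<dots> \<approx> geom w" by (rule absorb)
  finally show ?case .
qed

lemma geom_square:
  assumes "w \<in> FA n" "w ^ d \<approx> 1"
  shows "geom w * geom w \<approx> of_nat d * geom w"
proof -
  have "geom w * geom w = (\<Sum>r<d. geom w * w ^ r)" by (simp add: geom_def[of w] sum_distrib_left)
  also have "\<dots> \<approx> (\<Sum>r<d. geom w)" using geom_mult_power[OF assms] by (intro eqv_sum)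
  finally show ?thesis by simp
qed

definition esum :: "nat \<Rightarrow> fa"
  where "esum k = (\<Sum>s<d. tt k ^ s * tt (Suc k) ^ (d - s))"

text \<open>\<open>tquot k\<close> represents \<open>t\<^sub>k t\<^sub>k\<^sub>+\<^sub>1\<^sup>-\<^sup>1\<close>, so that \<open>e\<^sub>k = (1/d) \<Sum>\<^sub>s<\<^sub>d tquot k ^ s\<close>.\<close>

definition tquot :: "nat \<Rightarrow> fa"
  where "tquot k = tt k * tt (Suc k) ^ (d - 1)"

lemma ee_eq_esum: "ee d k = sc (1 / of_nat d) * esum k"
  by (simp add: ee_def esum_def)

lemma FA_esum [simp]: "1 \<le> k \<Longrightarrow> k \<le> n - 1 \<Longrightarrow> esum k \<in> FA n"
  by (simp add: esum_def)

lemma FA_tquot [simp]: "1 \<le> k \<Longrightarrow> k \<le> n - 1 \<Longrightarrow> tquot k \<in> FA n"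
  by (simp add: tquot_def)

lemma t_power_diff:
  assumes j: "1 \<le> j" "j \<le> n" and s: "s < d"
  shows "tt j ^ (d - s) \<approx> tt j ^ ((d - 1) * s)"
proof (cases s)
  case 0
  then show ?thesis using t_power_d[OF j] by simp
next
  case (Suc s')
  then have "(d - 1) * s = d * s' + (d - s)" using s by (simp add: algebra_simps)
  then have "tt j ^ ((d - 1) * s) = (tt j ^ d) ^ s' * tt j ^ (d - s)"
    by (simp add: power_add power_mult)
  also have "\<dots> \<approx> 1 * tt j ^ (d - s)"
    using j by (intro eqv_mult_right eqv_power_one t_power_d) simp_all
  finally show ?thesis by (simp add: eqv_sym)
qed

lemma t_Suc_commute_power:
  assumes k: "1 \<le> k" "k \<le> n - 1"
  shows "intertwines (tt (Suc k) ^ m) (tt k ^ l) (tt k ^ l)"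
proof -
  have "intertwines (tt (Suc k)) (tt k) (tt k)"
    unfolding intertwines_def using k by (intro t_commute) simp_all
  then show ?thesis using k by (intro commute_power) simp_all
qed

lemma esum_eqv_geom:
  assumes k: "1 \<le> k" "k \<le> n - 1"
  shows "esum k \<approx> geom (tquot k)"
  unfolding esum_def geom_def
proof (rule eqv_sum)
  fix s assume "s \<in> {..<d}"
  then have s: "s < d" by simp
  let ?x = "tt k" and ?z = "tt (Suc k) ^ (d - 1)"
  have comm: "intertwines ?z ?x ?x" using t_Suc_commute_power[OF k, of "d - 1" 1] by simp
  have "?x ^ s * tt (Suc k) ^ (d - s) \<approx> ?x ^ s * tt (Suc k) ^ ((d - 1) * s)"
    using k s by (intro eqv_mult_left t_power_diff) simp_all
  also have "\<dots> = ?x ^ s * ?z ^ s" by (simp add: power_mult)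
  also have "\<dots> \<approx> (?x * ?z) ^ s"
    by (rule eqv_sym[OF commute_power_mult_distrib[OF comm]]) (use k in simp_all)
  finally show "?x ^ s * tt (Suc k) ^ (d - s) \<approx> tquot k ^ s" by (simp add: tquot_def)
qed

lemma tquot_power_d:
  assumes k: "1 \<le> k" "k \<le> n - 1"
  shows "tquot k ^ d \<approx> 1"
proof -
  let ?x = "tt k" and ?y = "tt (Suc k)"
  have comm: "intertwines (?y ^ (d - 1)) ?x ?x" using t_Suc_commute_power[OF k, of "d - 1" 1] by simp
  have "tquot k ^ d \<approx> ?x ^ d * (?y ^ (d - 1)) ^ d"
    unfolding tquot_def by (rule commute_power_mult_distrib[OF comm]) (use k in simp_all)
  also have "\<dots> = ?x ^ d * (?y ^ d) ^ (d - 1)" by (simp add: power_mult[symmetric] mult.commute)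
  also have "\<dots> \<approx> 1 * 1" using k by (intro eqv_mult t_power_d eqv_power_one) simp_all
  finally show ?thesis by simp
qed

lemma ee_idem:
  assumes k: "1 \<le> k" "k \<le> n - 1"
  shows "ee d k * ee d k \<approx> ee d k"
proof -
  let ?c = "sc (1 / of_nat d)"
  have "ee d k * ee d k = ?c * (esum k * ?c) * esum k"
    by (simp add: ee_eq_esum mult.assoc)
  also have "\<dots> = ?c * ?c * (esum k * esum k)"
    by (simp add: sc_commute[of _ "esum k", symmetric] mult.assoc)
  also have "\<dots> \<approx> ?c * ?c * (geom (tquot k) * geom (tquot k))"
    using k esum_eqv_geom by (intro eqv_mult_left eqv_mult) simp_all
  also have "\<dots> \<approx> ?c * ?c * (of_nat d * geom (tquot k))"
    using k tquot_power_d by (intro eqv_mult_left geom_square) simp_all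
  also have "\<dots> \<approx> ?c * ?c * (of_nat d * esum k)"
    using k eqv_sym[OF esum_eqv_geom[OF k]] by (intro eqv_mult_left) simp_all
  also have "\<dots> = sc (1 / of_nat d * (1 / of_nat d) * of_nat d) * esum k"
    by (simp only: sc_of_nat sc_mult mult.assoc)
  also have "\<dots> = ee d k"
    using d_pos by (simp add: ee_eq_esum)
  finally show ?thesis .
qed

lemma g_ee_commute:
  assumes k: "1 \<le> k" "k \<le> n - 1"
  shows "gg k * ee d k \<approx> ee d k * gg k"
proof -
  let ?x = "tt k" and ?y = "tt (Suc k)" and ?g = "gg k"
  obtain d' where d: "d = Suc d'" using d_pos by (cases d) auto
  define esum' where "esum' = (\<Sum>s<d. ?y ^ s * ?x ^ (d - s))"
  have "intertwines ?g (esum k) esum'"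
    unfolding esum_def esum'_def using k
    by (intro intertwines_sum intertwines_mult intertwines_power)
      (simp_all add: intertwines_def g_t g_t_Suc)
  moreover have "esum' \<approx> esum k"
  proof -
    have "esum' \<approx> (\<Sum>s<d. ?x ^ (d - s) * ?y ^ s)"
      unfolding esum'_def using t_Suc_commute_power[OF k]
      by (intro eqv_sum) (simp add: intertwines_def)
    also have "\<dots> = ?x ^ d + (\<Sum>i<d'. ?x ^ (d - Suc i) * ?y ^ Suc i)"
      unfolding d by (simp only: sum.lessThan_Suc_shift) simp
    also have "(\<Sum>i<d'. ?x ^ (d - Suc i) * ?y ^ Suc i) = (\<Sum>i<d'. ?x ^ Suc i * ?y ^ (d - Suc i))"
      by (subst sum.nat_diff_reindex[symmetric]) (auto intro!: sum.cong simp: d Suc_diff_Suc)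
    also have "?x ^ d + \<dots> \<approx> ?y ^ d + (\<Sum>i<d'. ?x ^ Suc i * ?y ^ (d - Suc i))"
      using k by (intro eqv_add eqv_refl eqv_trans[OF t_power_d eqv_sym[OF t_power_d]]) simp_all
    also have "\<dots> = esum k"
      unfolding esum_def unfolding d by (simp only: sum.lessThan_Suc_shift) simp
    finally show ?thesis .
  qed
  ultimately have "intertwines ?g (ee d k) (ee d k)"
    unfolding ee_eq_esum using k
    by (intro intertwines_eqv_right[OF intertwines_sc] eqv_mult_left) simp_all
  then show ?thesis by (simp add: intertwines_def)
qed

definition g_inv :: "nat \<Rightarrow> fa"
  where "g_inv k = gg k + sc (1 / u - 1) * ee d k + sc (1 / u - 1) * ee d k * gg k"

lemma FA_g_inv [simp]: "1 \<le> k \<Longrightarrow> k \<le> n - 1 \<Longrightarrow> g_inv k \<in> FA n"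
  by (simp add: g_inv_def)

lemma g_inv_mult_g:
  assumes k: "1 \<le> k" "k \<le> n - 1"
  shows "g_inv k * gg k \<approx> 1"
proof -
  let ?g = "gg k" and ?e = "ee d k" and ?a = "sc (u - 1)" and ?b = "sc (1 / u - 1)"
  have g: "?g \<in> FA n" and e: "?e \<in> FA n" using k by simp_all
  have ea: "?e * ?a = ?a * ?e" by (rule sc_commute[symmetric])
  have "g_inv k * ?g = ?g * ?g + ?b * (?e * ?g) + ?b * (?e * (?g * ?g))"
    by (simp add: g_inv_def algebra_simps)
  also have "\<dots> \<approx> (1 + ?a * ?e + ?a * ?e * ?g) + ?b * (?e * ?g)
                  + ?b * (?e * (1 + ?a * ?e + ?a * ?e * ?g))"
    using g_quadratic[OF k] e by (intro eqv_add eqv_refl eqv_mult_left) simp_all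
  also have "\<dots> = (1 + ?a * ?e + ?a * ?e * ?g) + ?b * (?e * ?g)
                  + ?b * (?e + ?a * (?e * ?e) + ?a * (?e * ?e) * ?g)"
    by (simp add: distrib_left mult.assoc[symmetric] ea)
  also have "\<dots> \<approx> (1 + ?a * ?e + ?a * ?e * ?g) + ?b * (?e * ?g)
                  + ?b * (?e + ?a * ?e + ?a * ?e * ?g)"
    using ee_idem[OF k] g by (intro eqv_add eqv_refl eqv_mult_left eqv_mult_right) simp_all
  also have "\<dots> = 1 + (?a + ?b + ?b * ?a) * ?e + (?a + ?b + ?b * ?a) * ?e * ?g"
    by (simp add: algebra_simps)
  also have "?a + ?b + ?b * ?a = sc ((u - 1) + (1 / u - 1) + (1 / u - 1) * (u - 1))"
    by (simp only: sc_add sc_mult)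
  also have "\<dots> = 0"
    using u_nonzero by (simp add: field_simps sc_eq_single_zero)
  finally show ?thesis by simp
qed

lemma g_mult_g_inv:
  assumes k: "1 \<le> k" "k \<le> n - 1"
  shows "gg k * g_inv k \<approx> 1"
proof -
  let ?g = "gg k" and ?e = "ee d k" and ?b = "sc (1 / u - 1)"
  have comm: "?g * ?e - ?e * ?g \<in> ideal_gen n S" using g_ee_commute[OF k] by (simp add: eqv_def)
  have "?g * g_inv k - g_inv k * ?g = ?b * (?g * ?e - ?e * ?g) + ?b * ((?g * ?e - ?e * ?g) * ?g)"
    by (simp add: g_inv_def distrib_left distrib_right left_diff_distrib right_diff_distrib
        mult.assoc[symmetric] sc_commute[of _ ?g, symmetric] add_ac)
  also have "\<dots> \<in> ideal_gen n S"
    using comm k by (intro ideal_gen.add ideal_gen_mult_left ideal_gen_mult_right) simp_all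
  finally have "?g * g_inv k \<approx> g_inv k * ?g" by (simp add: eqv_def)
  then show ?thesis using g_inv_mult_g[OF k] by (rule eqv_trans)
qed

lemma eqv_cancel_inner: "x * y \<approx> 1 \<Longrightarrow> p \<in> FA n \<Longrightarrow> q \<in> FA n \<Longrightarrow> p * x * y * q \<approx> p * q"
  using eqv_mult_left[of p "x * y * q" q] eqv_mult_right[of q "x * y" 1]
  by (simp add: mult.assoc)

lemma unit_conj_in_ideal_iff:
  assumes wv: "w * v \<approx> 1" and vw: "v * w \<approx> 1" and wxy: "intertwines w x y"
    and FA: "v \<in> FA n" "w \<in> FA n" "x \<in> FA n" "y \<in> FA n"
  shows "x \<in> ideal_gen n S \<longleftrightarrow> y \<in> ideal_gen n S"
proof
  assume "x \<in> ideal_gen n S"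
  have "y \<approx> y * (w * v)" using eqv_mult_left[OF FA(4) eqv_sym[OF wv]] by simp
  also have "\<dots> = (y * w) * v" by (simp add: mult.assoc)
  also have "\<dots> \<approx> (w * x) * v"
    using FA eqv_sym[OF wxy[unfolded intertwines_def]] by (intro eqv_mult_right)
  also have "\<dots> \<approx> 0"
    using \<open>x \<in> ideal_gen n S\<close> FA by (simp add: eqv_zero_iff ideal_gen_mult_left ideal_gen_mult_right)
  finally show "y \<in> ideal_gen n S" by (simp add: eqv_zero_iff)
next
  assume "y \<in> ideal_gen n S"
  have "x \<approx> (v * w) * x" using eqv_mult_right[OF FA(3) eqv_sym[OF vw]] by simp
  also have "\<dots> = v * (w * x)" by (simp add: mult.assoc)
  also have "\<dots> \<approx> v * (y * w)"
    using wxy FA by (intro eqv_mult_left) (simp_all add: intertwines_def)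
  also have "\<dots> \<approx> 0"
    using \<open>y \<in> ideal_gen n S\<close> FA by (simp add: eqv_zero_iff ideal_gen_mult_left ideal_gen_mult_right)
  finally show "x \<in> ideal_gen n S" by (simp add: eqv_zero_iff)
qed

definition shift :: "nat \<Rightarrow> fa"
  where "shift i = gg i * gg (Suc i) * gg (Suc (Suc i))"

definition shift_inv :: "nat \<Rightarrow> fa"
  where "shift_inv i = g_inv (Suc (Suc i)) * g_inv (Suc i) * g_inv i"

lemma FA_shift [simp]: "1 \<le> i \<Longrightarrow> i + 3 \<le> n \<Longrightarrow> shift i \<in> FA n"
  by (simp add: shift_def)

lemma FA_shift_inv [simp]: "1 \<le> i \<Longrightarrow> i + 3 \<le> n \<Longrightarrow> shift_inv i \<in> FA n"
  by (simp add: shift_inv_def)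

lemma shift_mult_shift_inv:
  assumes i: "1 \<le> i" "i + 3 \<le> n"
  shows "shift i * shift_inv i \<approx> 1"
proof -
  let ?a = "gg i" and ?b = "gg (Suc i)" and ?c = "gg (Suc (Suc i))"
  let ?h0 = "g_inv i" and ?h1 = "g_inv (Suc i)" and ?h2 = "g_inv (Suc (Suc i))"
  have "shift i * shift_inv i = (?a * ?b) * ?c * ?h2 * (?h1 * ?h0)"
    by (simp add: shift_def shift_inv_def mult.assoc)
  also have "\<dots> \<approx> (?a * ?b) * (?h1 * ?h0)" using i by (intro eqv_cancel_inner g_mult_g_inv) simp_all
  also have "\<dots> = ?a * ?b * ?h1 * ?h0" by (simp add: mult.assoc)
  also have "\<dots> \<approx> ?a * ?h0" using i by (intro eqv_cancel_inner g_mult_g_inv) simp_all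
  also have "\<dots> \<approx> 1" using i by (intro g_mult_g_inv) simp_all
  finally show ?thesis .
qed

lemma shift_inv_mult_shift:
  assumes i: "1 \<le> i" "i + 3 \<le> n"
  shows "shift_inv i * shift i \<approx> 1"
proof -
  let ?a = "gg i" and ?b = "gg (Suc i)" and ?c = "gg (Suc (Suc i))"
  let ?h0 = "g_inv i" and ?h1 = "g_inv (Suc i)" and ?h2 = "g_inv (Suc (Suc i))"
  have "shift_inv i * shift i = (?h2 * ?h1) * ?h0 * ?a * (?b * ?c)"
    by (simp add: shift_def shift_inv_def mult.assoc)
  also have "\<dots> \<approx> (?h2 * ?h1) * (?b * ?c)" using i by (intro eqv_cancel_inner g_inv_mult_g) simp_all
  also have "\<dots> = ?h2 * ?h1 * ?b * ?c" by (simp add: mult.assoc)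
  also have "\<dots> \<approx> ?h2 * ?c" using i by (intro eqv_cancel_inner g_inv_mult_g) simp_all
  also have "\<dots> \<approx> 1" using i by (intro g_inv_mult_g) simp_all
  finally show ?thesis .
qed

lemma shift_intertwines_g:
  assumes i: "1 \<le> i" "i + 3 \<le> n"
  shows "intertwines (shift i) (gg i) (gg (Suc i))"
proof -
  let ?a = "gg i" and ?b = "gg (Suc i)" and ?c = "gg (Suc (Suc i))"
  have braid: "?b * ?a * ?b \<approx> ?a * ?b * ?a" using i by (intro g_braid) simp_all
  have "shift i * ?a = ?a * ?b * (?c * ?a)" by (simp add: shift_def mult.assoc)
  also have "\<dots> \<approx> ?a * ?b * (?a * ?c)" using i by (intro eqv_mult_left g_commute_far) simp_all
  also have "\<dots> = (?a * ?b * ?a) * ?c" by (simp add: mult.assoc)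
  also have "\<dots> \<approx> (?b * ?a * ?b) * ?c" using i eqv_sym[OF braid] by (intro eqv_mult_right) simp_all
  also have "\<dots> = ?b * shift i" by (simp add: shift_def mult.assoc)
  finally show ?thesis by (simp add: intertwines_def)
qed

lemma shift_intertwines_g_Suc:
  assumes i: "1 \<le> i" "i + 3 \<le> n"
  shows "intertwines (shift i) (gg (Suc i)) (gg (Suc (Suc i)))"
proof -
  let ?a = "gg i" and ?b = "gg (Suc i)" and ?c = "gg (Suc (Suc i))"
  have braid: "?c * ?b * ?c \<approx> ?b * ?c * ?b" using i by (intro g_braid) simp_all
  have "shift i * ?b = ?a * (?b * ?c * ?b)" by (simp add: shift_def mult.assoc)
  also have "\<dots> \<approx> ?a * (?c * ?b * ?c)" using i eqv_sym[OF braid] by (intro eqv_mult_left) simp_all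
  also have "\<dots> = (?a * ?c) * (?b * ?c)" by (simp add: mult.assoc)
  also have "\<dots> \<approx> (?c * ?a) * (?b * ?c)" using i by (intro eqv_mult_right g_commute_far) simp_all
  also have "\<dots> = ?c * shift i" by (simp add: shift_def mult.assoc)
  finally show ?thesis by (simp add: intertwines_def)
qed

lemma intertwines_comp3:
  assumes "intertwines c x y" "intertwines b y y'" "intertwines a y' z"
    and "a \<in> FA n" "b \<in> FA n" "c \<in> FA n"
  shows "intertwines (a * b * c) x z"
  using assms by (intro intertwines_comp[of c x y "a * b" z] intertwines_comp[of b y y' a z]) simp_all

lemma shift_intertwines_t:
  assumes i: "1 \<le> i" "i + 3 \<le> n" and j: "i \<le> j" "j \<le> i + 2"
  shows "intertwines (shift i) (tt j) (tt (Suc j))"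
proof -
  consider "j = i" | "j = Suc i" | "j = Suc (Suc i)" using j by linarith
  then show ?thesis
  proof cases
    case 1
    then show ?thesis
      using i unfolding shift_def by (intro intertwines_comp3[of _ _ "tt i" _ "tt i"])
        (simp_all add: intertwines_def g_t g_t_commute_far)
  next
    case 2
    then show ?thesis
      using i unfolding shift_def by (intro intertwines_comp3[of _ _ "tt (Suc i)" _ "tt (Suc (Suc i))"])
        (simp_all add: intertwines_def g_t g_t_commute_far)
  next
    case 3
    then show ?thesis
      using i unfolding shift_def by (intro intertwines_comp3[of _ _ "tt (Suc (Suc (Suc i)))" _ "tt (Suc (Suc (Suc i)))"])
        (simp_all add: intertwines_def g_t g_t_commute_far)
  qed
qed

lemma shift_intertwines_cc:
  assumes i: "1 \<le> i" "i + 3 \<le> n"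
  shows "intertwines (shift i) (cc d i) (cc d (Suc i))"
  unfolding cc_expand using i
  by (intro intertwines_mult intertwines_add intertwines_sum intertwines_power intertwines_one
      shift_intertwines_g shift_intertwines_g_Suc shift_intertwines_t) simp_all

lemma cc_in_ideal_Suc_iff:
  assumes "1 \<le> i" "i + 3 \<le> n"
  shows "cc d i \<in> ideal_gen n S \<longleftrightarrow> cc d (Suc i) \<in> ideal_gen n S"
  by (rule unit_conj_in_ideal_iff[OF shift_mult_shift_inv shift_inv_mult_shift shift_intertwines_cc])
    (use assms in simp_all)

lemma cc_in_ideal_iff:
  assumes "1 \<le> i" "i + 2 \<le> n" "1 \<le> j" "j + 2 \<le> n"
  shows "cc d i \<in> ideal_gen n S \<longleftrightarrow> cc d j \<in> ideal_gen n S"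
  using assms
proof (induction i j rule: linorder_wlog)
  case (le i j)
  from \<open>i \<le> j\<close> \<open>j + 2 \<le> n\<close> show ?case
  proof (induction j rule: dec_induct)
    case (step j)
    then show ?case using cc_in_ideal_Suc_iff[of j] \<open>1 \<le> i\<close> by simp
  qed simp
qed (rule sym)

end

theorem corollary2:
  fixes d n i :: nat and u :: complex
  assumes "d \<ge> 1" and "n \<ge> 3" and "u \<noteq> 0"
    and "1 \<le> i" and "i \<le> n - 2"
  shows "ideal_gen n (YH_rels d n u \<union> {cc d i})
           = ideal_gen n (YH_rels d n u \<union> {cc d j | j. 1 \<le> j \<and> j \<le> n - 2})"
proof -
  let ?I = "ideal_gen n (YH_rels d n u \<union> {cc d i})"
  interpret yh_ideal d n u "YH_rels d n u \<union> {cc d i}"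
    using assms by unfold_locales auto
  have "cc d j \<in> ?I" if "1 \<le> j" "j \<le> n - 2" for j
    using cc_in_ideal_iff[of i j] ideal_gen_base[of "cc d i"] that assms by simp
  then have "YH_rels d n u \<union> {cc d j | j. 1 \<le> j \<and> j \<le> n - 2} \<subseteq> ?I"
    by (auto intro: ideal_gen_base)
  then show ?thesis
    using assms by (intro subset_antisym ideal_gen_mono ideal_gen_subset) auto
qed

end
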